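(* Assume $\mathrm{char}(K)\neq2,3,5$. Let $\phi$ be a $5\times5$ alternating matrix of linear forms in $x_1,\dots,x_5$ with $4\times4$ Pfaffians $p_1,\dots,p_5$. If $S(\phi)\neq0$ then the fifteen quartics $\{p_ip_j:1\le i\le j\le5\}$ are linearly independent.
   Context: $p_i=(-1)^{i+1}\mathrm{pf}(\phi^{\{i\}})$, where $\phi^{\{i\}}$ is obtained from $\phi$ by deleting the $i$th row and column. $S(\phi)=\det(\partial p_i/\partial x_j)_{i,j=1,\dots,5}$, a quintic form in $x_1,\dots,x_5$. *)

theory Defs
  imports "HOL-Library.Poly_Mapping" "HOL-Combinatorics.Permutations"
begin

text \<open>Multivariate polynomials over a coefficient type 'k in the variables x_1, x_2, ...
  (variable x_i is indexed by the natural number i); a monomial is a finitely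
  supported exponent vector.\<close>
type_synonym 'k mpoly = "(nat \<Rightarrow>\<^sub>0 nat) \<Rightarrow>\<^sub>0 'k"

definition Var :: "nat \<Rightarrow> 'k::{zero,one} mpoly" where
  "Var i = Poly_Mapping.single (Poly_Mapping.single i 1) 1"

definition Const :: "'k::zero \<Rightarrow> 'k mpoly" where
  "Const c = Poly_Mapping.single 0 c"

definition is_linear_form5 :: "'k::comm_ring_1 mpoly \<Rightarrow> bool" where
  "is_linear_form5 p \<longleftrightarrow> (\<exists>c :: nat \<Rightarrow> 'k. p = (\<Sum>k=1..5. Const (c k) * Var k))"

definition alt_linear_matrix5 :: "(nat \<Rightarrow> nat \<Rightarrow> 'k::comm_ring_1 mpoly) \<Rightarrow> bool" where
  "alt_linear_matrix5 A \<longleftrightarrow>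
     (\<forall>i\<in>{1..5}. A i i = 0) \<and>
     (\<forall>i\<in>{1..5}. \<forall>j\<in>{1..5}. A j i = - A i j) \<and>
     (\<forall>i\<in>{1..5}. \<forall>j\<in>{1..5}. is_linear_form5 (A i j))"

text \<open>Pfaffian of the 4x4 alternating submatrix on the (increasing) indices l!0<l!1<l!2<l!3.\<close>
definition pf4 :: "(nat \<Rightarrow> nat \<Rightarrow> 'k::comm_ring_1) \<Rightarrow> nat list \<Rightarrow> 'k" where
  "pf4 A l = A (l!0) (l!1) * A (l!2) (l!3) - A (l!0) (l!2) * A (l!1) (l!3)
             + A (l!0) (l!3) * A (l!1) (l!2)"

definition pfaff_p :: "(nat \<Rightarrow> nat \<Rightarrow> 'k::comm_ring_1) \<Rightarrow> nat \<Rightarrow> 'k" where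
  "pfaff_p A i = (-1) ^ (i + 1) * pf4 A (filter (\<lambda>k. k \<noteq> i) [1..<6])"

definition pdiff :: "nat \<Rightarrow> 'k::comm_ring_1 mpoly \<Rightarrow> 'k mpoly" where
  "pdiff i p = (\<Sum>m\<in>Poly_Mapping.keys p.
      Poly_Mapping.single (m - Poly_Mapping.single i 1)
        (of_nat (Poly_Mapping.lookup m i) * Poly_Mapping.lookup p m))"

definition detn :: "nat \<Rightarrow> (nat \<Rightarrow> nat \<Rightarrow> 'a::comm_ring_1) \<Rightarrow> 'a" where
  "detn n M = (\<Sum>\<sigma> | \<sigma> permutes {1..n}. of_int (sign \<sigma>) * (\<Prod>i=1..n. M i (\<sigma> i)))"

definition S_form :: "(nat \<Rightarrow> nat \<Rightarrow> 'k::comm_ring_1 mpoly) \<Rightarrow> 'k mpoly" where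
  "S_form A = detn 5 (\<lambda>i j. pdiff j (pfaff_p A i))"

end

theory Submission
  imports Defs
begin

text \<open>Differentiating a relation \<open>\<Sum>\<^sub>i\<^sub>,\<^sub>k c\<^sub>i\<^sub>k p\<^sub>i p\<^sub>k = 0\<close> with respect to \<open>x\<^sub>j\<close> gives
  \<open>\<Sum>\<^sub>l v\<^sub>l \<partial>p\<^sub>l/\<partial>x\<^sub>j = 0\<close> with \<open>v\<^sub>l = \<Sum>\<^sub>m (c\<^sub>l\<^sub>m + c\<^sub>m\<^sub>l) p\<^sub>m\<close>, i.e. a linear dependence of the rows of
  the Jacobian matrix over the polynomial ring. Since its determinant \<open>S(\<phi>)\<close> is nonzero,
  every \<open>v\<^sub>l\<close> vanishes. Each \<open>v\<^sub>l = 0\<close> is in turn a linear relation among the \<open>p\<^sub>m\<close> with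
  constant coefficients, and differentiating it once more shows that these coefficients
  \<open>c\<^sub>l\<^sub>m + c\<^sub>m\<^sub>l\<close> vanish. For \<open>l = m\<close> this is \<open>2 c\<^sub>l\<^sub>l\<close>, so only \<open>char K \<noteq> 2\<close> is needed, and the
  argument applies to any polynomials with nonzero Jacobian determinant.\<close>

lemma pdiff_eq_sum_superset:
  assumes "finite S" "Poly_Mapping.keys p \<subseteq> S"
  shows "pdiff i p = (\<Sum>m\<in>S. Poly_Mapping.single (m - Poly_Mapping.single i 1)
           (of_nat (Poly_Mapping.lookup m i) * Poly_Mapping.lookup p m))"
  unfolding pdiff_def
  by (rule sum.mono_neutral_left) (use assms in \<open>auto simp: in_keys_iff\<close>)

lemma pdiff_zero [simp]: "pdiff i 0 = 0"
  by (simp add: pdiff_def)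

lemma pdiff_add: "pdiff i (p + q) = pdiff i p + pdiff i q"
proof -
  let ?S = "Poly_Mapping.keys p \<union> Poly_Mapping.keys q"
  have S: "finite ?S" and "Poly_Mapping.keys (p + q) \<subseteq> ?S"
    by (simp_all add: keys_add)
  then show ?thesis
    using pdiff_eq_sum_superset[OF S, of p] pdiff_eq_sum_superset[OF S, of q]
      pdiff_eq_sum_superset[OF S, of "p + q"]
    by (simp add: lookup_add distrib_left single_add sum.distrib)
qed

lemma pdiff_sum: "pdiff i (sum f A) = (\<Sum>x\<in>A. pdiff i (f x))"
  by (induction A rule: infinite_finite_induct) (auto simp: pdiff_add)

lemma pdiff_single:
  "pdiff i (Poly_Mapping.single m c) =
     Poly_Mapping.single (m - Poly_Mapping.single i 1) (of_nat (Poly_Mapping.lookup m i) * c)"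
  by (subst pdiff_eq_sum_superset[of "{m}"]) auto

text \<open>Monomial subtraction is truncated, so the two keys differ when \<open>x\<^sub>i\<close> does not occur
  in \<open>m\<close>; but then the coefficient is zero.\<close>
lemma single_diff_single_add:
  fixes m n :: "nat \<Rightarrow>\<^sub>0 nat"
  shows "Poly_Mapping.single (m - Poly_Mapping.single i 1 + n) (of_nat (Poly_Mapping.lookup m i) * c)
       = Poly_Mapping.single (m + n - Poly_Mapping.single i 1) (of_nat (Poly_Mapping.lookup m i) * c)"
proof (cases "Poly_Mapping.lookup m i = 0")
  case False
  then have "m - Poly_Mapping.single i 1 + n = m + n - Poly_Mapping.single i 1"
    by (intro poly_mapping_eqI) (auto simp: lookup_add lookup_minus lookup_single when_def)
  then show ?thesis by simp
qed simp

lemma pdiff_mult_single: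
  fixes a b :: "'k::comm_ring_1"
  shows "pdiff i (Poly_Mapping.single m a * Poly_Mapping.single n b) =
    pdiff i (Poly_Mapping.single m a) * Poly_Mapping.single n b
    + Poly_Mapping.single m a * pdiff i (Poly_Mapping.single n b)"
  using single_diff_single_add[of m i n "a * b"] single_diff_single_add[of n i m "a * b"]
  by (simp add: mult_single pdiff_single lookup_add single_add[symmetric] algebra_simps)

lemma pdiff_mult: "pdiff i (p * q) = pdiff i p * q + p * pdiff i (q :: 'k::comm_ring_1 mpoly)"
proof -
  have p: "p = (\<Sum>m\<in>Poly_Mapping.keys p. Poly_Mapping.single m (Poly_Mapping.lookup p m))"
    and q: "q = (\<Sum>m\<in>Poly_Mapping.keys q. Poly_Mapping.single m (Poly_Mapping.lookup q m))"
    by (rule poly_mapping_eqI; simp add: lookup_sum lookup_single when_def in_keys_iff)+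
  have "pdiff i ((\<Sum>m\<in>A. Poly_Mapping.single m (f m)) * (\<Sum>n\<in>B. Poly_Mapping.single n (g n)))
      = pdiff i (\<Sum>m\<in>A. Poly_Mapping.single m (f m)) * (\<Sum>n\<in>B. Poly_Mapping.single n (g n))
        + (\<Sum>m\<in>A. Poly_Mapping.single m (f m)) * pdiff i (\<Sum>n\<in>B. Poly_Mapping.single n (g n))"
    for A B and f g :: "(nat \<Rightarrow>\<^sub>0 nat) \<Rightarrow> 'k"
    by (simp add: sum_product pdiff_sum pdiff_mult_single sum.distrib)
  from this[where A = "Poly_Mapping.keys p" and f = "Poly_Mapping.lookup p"
      and B = "Poly_Mapping.keys q" and g = "Poly_Mapping.lookup q", folded p q]
  show ?thesis .
qed

lemma pdiff_Const [simp]: "pdiff i (Const c) = 0"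
  by (simp add: Const_def pdiff_single)

lemma pdiff_Const_mult: "pdiff i (Const c * p) = Const c * pdiff i p"
  by (simp add: pdiff_mult)

lemma Const_add: "Const (a + b) = Const a + Const b"
  by (simp add: Const_def single_add)

lemma Const_eq_0_iff [simp]: "Const c = 0 \<longleftrightarrow> c = 0"
  by (metis Const_def lookup_single_eq single_zero)

lemma numeral_mpoly_eq_0_iff [simp]:
  "(numeral n :: 'k::comm_ring_1 mpoly) = 0 \<longleftrightarrow> (numeral n :: 'k) = 0"
  using Const_eq_0_iff[of "numeral n :: 'k"] by (simp add: Const_def)

lemma detn_row_linear_combination:
  fixes M :: "nat \<Rightarrow> nat \<Rightarrow> 'a::comm_ring_1"
  assumes l: "l \<in> {1..n}"
  shows "detn n (\<lambda>i j. if i = l then (\<Sum>k\<in>K. w k * R k j) else M i j) =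
    (\<Sum>k\<in>K. w k * detn n (\<lambda>i j. if i = l then R k j else M i j))"
proof -
  let ?rest = "\<lambda>\<sigma>. \<Prod>i\<in>{1..n}-{l}. M i (\<sigma> i)"
  have row_l: "(\<Prod>i=1..n. if i = l then F (\<sigma> i) else M i (\<sigma> i)) = F (\<sigma> l) * ?rest \<sigma>"
    for F :: "nat \<Rightarrow> 'a" and \<sigma>
    using l by (subst prod.remove[of _ l]) (auto intro!: prod.cong)
  have "detn n (\<lambda>i j. if i = l then (\<Sum>k\<in>K. w k * R k j) else M i j) =
      (\<Sum>\<sigma> | \<sigma> permutes {1..n}. of_int (sign \<sigma>) * ((\<Sum>k\<in>K. w k * R k (\<sigma> l)) * ?rest \<sigma>))"
    unfolding detn_def by (rule sum.cong[OF refl], subst row_l, rule refl)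
  also have "\<dots> = (\<Sum>k\<in>K. w k *
      (\<Sum>\<sigma> | \<sigma> permutes {1..n}. of_int (sign \<sigma>) * (R k (\<sigma> l) * ?rest \<sigma>)))"
    by (simp add: sum_distrib_left sum_distrib_right mult_ac sum.swap[where B = K])
  also have "\<dots> = (\<Sum>k\<in>K. w k * detn n (\<lambda>i j. if i = l then R k j else M i j))"
    unfolding detn_def
    by (intro sum.cong refl arg_cong[where f = "\<lambda>x. w _ * x"], subst row_l, rule refl)
  finally show ?thesis .
qed

lemma detn_zero_row:
  assumes "l \<in> {1..n}" "\<forall>j\<in>{1..n}. M l j = 0"
  shows "detn n M = 0"
  unfolding detn_def
proof (rule sum.neutral, intro ballI)
  fix \<sigma> assume "\<sigma> \<in> {\<sigma>. \<sigma> permutes {1..n}}"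
  then have "M l (\<sigma> l) = 0"
    using assms permutes_in_image[of \<sigma> "{1..n}" l] by simp
  then have "(\<Prod>i=1..n. M i (\<sigma> i)) = 0"
    using assms(1) by (intro prod_zero) auto
  then show "of_int (sign \<sigma>) * (\<Prod>i=1..n. M i (\<sigma> i)) = 0"
    by simp
qed

text \<open>Composing with the transposition of the two equal rows flips the sign of every
  term of the Leibniz formula, so \<open>det M = - det M\<close>; hence the hypothesis \<open>2 \<noteq> 0\<close>.\<close>
lemma detn_identical_rows:
  fixes M :: "nat \<Rightarrow> nat \<Rightarrow> 'a::idom"
  assumes two: "(2::'a) \<noteq> 0" and ab: "a \<in> {1..n}" "b \<in> {1..n}" "a \<noteq> b"
    and eq: "\<forall>j. M a j = M b j"
  shows "detn n M = 0"
proof -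
  define t where "t = Transposition.transpose a b"
  have t: "t permutes {1..n}"
    unfolding t_def using ab by (intro permutes_swap_id)
  have rows: "M (t i) = M i" for i
    unfolding t_def using eq by (auto simp: fun_eq_iff transpose_def)
  have "of_int (sign (\<sigma> \<circ> t)) * (\<Prod>i=1..n. M i ((\<sigma> \<circ> t) i))
      = - (of_int (sign \<sigma>) * (\<Prod>i=1..n. M i (\<sigma> i)))" if "\<sigma> permutes {1..n}" for \<sigma>
  proof -
    have "sign (\<sigma> \<circ> t) = sign \<sigma> * sign t"
      using that t by (intro sign_compose permutes_imp_permutation) auto
    also have "sign t = -1"
      using ab by (simp add: sign_swap_id t_def)
    finally have "sign (\<sigma> \<circ> t) = - sign \<sigma>" by (simp only: mult_minus1_right)
    moreover have "(\<Prod>i=1..n. M i (\<sigma> (t i))) = (\<Prod>i=1..n. M i (\<sigma> i))"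
      using prod.permute[OF t, of "\<lambda>i. M i (\<sigma> i)"] by (simp add: rows)
    ultimately show ?thesis by simp
  qed
  then have "detn n M = - detn n M"
    unfolding detn_def by (subst sum_permutations_compose_right[OF t]) (simp add: sum_negf)
  with two show ?thesis by simp
qed

lemma detn_dependent_rows:
  fixes M :: "nat \<Rightarrow> nat \<Rightarrow> 'a::idom"
  assumes two: "(2::'a) \<noteq> 0" and l: "l \<in> {1..n}" and wl: "w l \<noteq> 0"
    and dep: "\<forall>j\<in>{1..n}. (\<Sum>k=1..n. w k * M k j) = 0"
  shows "detn n M = 0"
proof -
  have "0 = detn n (\<lambda>i j. if i = l then (\<Sum>k=1..n. w k * M k j) else M i j)"
    using dep by (intro detn_zero_row[OF l, symmetric]) simp
  also have "\<dots> = (\<Sum>k=1..n. w k * detn n (\<lambda>i j. if i = l then M k j else M i j))"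
    by (rule detn_row_linear_combination[OF l])
  also have "\<dots> = w l * detn n M"
  proof (subst sum.remove[OF _ l], simp)
    have "detn n (\<lambda>i j. if i = l then M k j else M i j) = 0" if "k \<in> {1..n} - {l}" for k
      using that l by (intro detn_identical_rows[OF two l, of k]) auto
    moreover have "(\<lambda>i j. if i = l then M l j else M i j) = M"
      by (simp add: fun_eq_iff)
    ultimately show "w l * detn n (\<lambda>i j. if i = l then M l j else M i j)
        + (\<Sum>k\<in>{1..n} - {l}. w k * detn n (\<lambda>i j. if i = l then M k j else M i j)) = w l * detn n M"
      by simp
  qed
  finally show ?thesis using wl by simp
qed

lemma two_neq_zero_if_CHAR_neq_2:
  assumes "CHAR('a::idom) \<noteq> 2"
  shows "(2::'a) \<noteq> 0"
proof
  assume "(2::'a) = 0"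
  then have dvd: "CHAR('a) dvd 2"
    using of_nat_eq_0_iff_char_dvd[where 'a = 'a and n = 2] by simp
  then have "CHAR('a) \<le> 2"
    by (rule dvd_imp_le) simp
  moreover have "CHAR('a) \<noteq> 0"
    using dvd by (intro notI) simp
  ultimately show False
    using assms CHAR_not_1'[where 'a = 'a] by linarith
qed

lemma pdiff_quadratic_form:
  fixes c :: "nat \<Rightarrow> nat \<Rightarrow> 'k::comm_ring_1"
  shows "pdiff j (\<Sum>i\<in>I. \<Sum>k\<in>I. Const (c i k) * (P i * P k)) =
    (\<Sum>l\<in>I. (\<Sum>m\<in>I. Const (c l m + c m l) * P m) * pdiff j (P l))"
proof -
  have "pdiff j (\<Sum>i\<in>I. \<Sum>k\<in>I. Const (c i k) * (P i * P k)) =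
      (\<Sum>i\<in>I. \<Sum>k\<in>I. Const (c i k) * P k * pdiff j (P i))
      + (\<Sum>i\<in>I. \<Sum>k\<in>I. Const (c i k) * P i * pdiff j (P k))"
    by (simp add: pdiff_sum pdiff_Const_mult pdiff_mult distrib_left sum.distrib mult_ac)
  also have "(\<Sum>i\<in>I. \<Sum>k\<in>I. Const (c i k) * P i * pdiff j (P k))
      = (\<Sum>k\<in>I. \<Sum>i\<in>I. Const (c i k) * P i * pdiff j (P k))"
    by (rule sum.swap)
  finally show ?thesis
    by (simp add: Const_add distrib_right sum.distrib sum_distrib_right)
qed

lemma linear_relation_trivial_if_jacobian_nonzero:
  fixes P :: "nat \<Rightarrow> 'k::idom mpoly"
  assumes two: "(2::'k) \<noteq> 0" and jac: "detn n (\<lambda>i j. pdiff j (P i)) \<noteq> 0"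
    and rel: "(\<Sum>m=1..n. Const (b m) * P m) = 0" and l: "l \<in> {1..n}"
  shows "b l = 0"
proof (rule ccontr)
  assume "b l \<noteq> 0"
  moreover have "(\<Sum>m=1..n. Const (b m) * pdiff j (P m)) = 0" for j
    using arg_cong[OF rel, of "pdiff j"] by (simp add: pdiff_sum pdiff_Const_mult)
  ultimately have "detn n (\<lambda>i j. pdiff j (P i)) = 0"
    using two l by (intro detn_dependent_rows[of l n "\<lambda>m. Const (b m)"]) simp_all
  with jac show False ..
qed

lemma quadratic_relation_trivial_if_jacobian_nonzero:
  fixes P :: "nat \<Rightarrow> 'k::idom mpoly"
  assumes two: "(2::'k) \<noteq> 0" and jac: "detn n (\<lambda>i j. pdiff j (P i)) \<noteq> 0"
    and rel: "(\<Sum>i=1..n. \<Sum>k=1..n. Const (c i k) * (P i * P k)) = 0"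
    and l: "l \<in> {1..n}" and m: "m \<in> {1..n}"
  shows "c l m + c m l = 0"
proof -
  define v where "v l = (\<Sum>m=1..n. Const (c l m + c m l) * P m)" for l
  have "v l = 0"
  proof (rule ccontr)
    assume "v l \<noteq> 0"
    moreover have "(\<Sum>l=1..n. v l * pdiff j (P l)) = 0" for j
      using arg_cong[OF rel, of "pdiff j"] by (simp add: pdiff_quadratic_form v_def)
    ultimately have "detn n (\<lambda>i j. pdiff j (P i)) = 0"
      using two l by (intro detn_dependent_rows[of l n v]) simp_all
    with jac show False ..
  qed
  then show ?thesis
    using linear_relation_trivial_if_jacobian_nonzero[OF two jac _ m] by (simp add: v_def)
qed

lemma sum_upper_triangle:
  fixes n :: nat
  shows "(\<Sum>i=1..n. \<Sum>k=i..n. f i k) = (\<Sum>i=1..n. \<Sum>k=1..n. if i \<le> k then f i k else 0)"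
proof (rule sum.cong[OF refl])
  fix i assume "i \<in> {1..n}"
  then have "{i..n} = {1..n} \<inter> {k. i \<le> k}" by auto
  then show "(\<Sum>k=i..n. f i k) = (\<Sum>k=1..n. if i \<le> k then f i k else 0)"
    by (simp add: sum.inter_restrict)
qed

theorem lemma8p3:
  fixes \<phi> :: "nat \<Rightarrow> nat \<Rightarrow> 'k::field mpoly"
  assumes "CHAR('k) \<noteq> 2" and "CHAR('k) \<noteq> 3" and "CHAR('k) \<noteq> 5"
    and "alt_linear_matrix5 \<phi>"
    and "S_form \<phi> \<noteq> 0"
  shows "\<forall>a :: nat \<Rightarrow> nat \<Rightarrow> 'k.
           (\<Sum>i=1..5. \<Sum>j=i..5. Const (a i j) * (pfaff_p \<phi> i * pfaff_p \<phi> j)) = 0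
           \<longrightarrow> (\<forall>i j. 1 \<le> i \<and> i \<le> j \<and> j \<le> 5 \<longrightarrow> a i j = 0)"
proof (intro allI impI)
  fix a :: "nat \<Rightarrow> nat \<Rightarrow> 'k" and i j :: nat
  assume rel: "(\<Sum>i=1..5. \<Sum>j=i..5. Const (a i j) * (pfaff_p \<phi> i * pfaff_p \<phi> j)) = 0"
    and ij: "1 \<le> i \<and> i \<le> j \<and> j \<le> 5"
  define c where "c i k = (if i \<le> k then a i k else 0)" for i k
  have two: "(2::'k) \<noteq> 0"
    using assms(1) by (rule two_neq_zero_if_CHAR_neq_2)
  have c: "Const (c i k) * X = (if i \<le> k then Const (a i k) * X else 0)" for i k X
    by (simp add: c_def)
  have "(\<Sum>i=1..5. \<Sum>k=1..5. Const (c i k) * (pfaff_p \<phi> i * pfaff_p \<phi> k)) = 0"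
    using rel by (simp only: c sum_upper_triangle[symmetric])
  then have "c i j + c j i = 0"
    using two assms(5) ij
    by (intro quadratic_relation_trivial_if_jacobian_nonzero) (auto simp: S_form_def)
  then show "a i j = 0"
    using two ij by (cases "i = j") (auto simp: c_def)
qed

end
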